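(* Fix $d\ge1$, $p\in[0,1]$ and $k\in\{0,\dots,2d\}$ with $k\ge 1+2dp$. Then for any two disjoint nonempty sets $A,B\subseteq\mathcal N_o$, $$\mathbf P_p[N(o)\cap A\neq\emptyset\text{ and }N(o)\cap B\neq\emptyset]\le \mathbf Q_{k/(2d)}[N(o)\cap A\neq\emptyset\text{ and }N(o)\cap B\neq\emptyset].$$
   Context: $\mathcal N_o=\{v\in\mathbb Z^d:\|v\|_1=1\}$; $N(o)$ is a random subset of $\mathcal N_o$. Under $\mathbf P_p$ each element of $\mathcal N_o$ is included independently with probability $p$. Under $\mathbf Q_{k/(2d)}$, $N(o)$ is a uniformly random $k$-element subset of $\mathcal N_o$. *)

theory Defs
  imports "HOL-Probability.Probability"
begin

text \<open>Points of Z^d are represented as integer lists of length d.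
  The neighbourhood of the origin: vectors of l1-norm 1.\<close>
definition nbhd :: "nat \<Rightarrow> int list set" where
  "nbhd d = {v. length v = d \<and> sum_list (map abs v) = 1}"

definition Pp :: "nat \<Rightarrow> real \<Rightarrow> int list set pmf" where
  "Pp d p = map_pmf (\<lambda>f. {v \<in> nbhd d. f v}) (Pi_pmf (nbhd d) False (\<lambda>_. bernoulli_pmf p))"

text \<open>Q_{k/(2d)}: uniformly random k-element subset of nbhd d (indexed by k).\<close>
definition Qk :: "nat \<Rightarrow> nat \<Rightarrow> int list set pmf" where
  "Qk d k = pmf_of_set {S. S \<subseteq> nbhd d \<and> card S = k}"

end

theory Submission
  imports Defs
begin

text \<open>Write q = 1 - p, n = 2d, a = card A and b = card B. Under P_p the event has probability
  (1 - q^a)(1 - q^b); under Q it has probability hit_both_count n k a b / (n choose k), where the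
  numerator counts, by inclusion-exclusion, the k-subsets meeting both A and B. The two are compared
  by induction on a: Pascal's rule splits the k-subsets according to whether they contain a fixed
  point of A, leaving an (n - 1)-set. The hypothesis n - k + 1 \<le> n q then gives the two estimates
  needed there: a uniform (k - 1)-subset of the n - 1 remaining points misses B with probability
  at most q^b, and (n - 1 choose k) / (n - 1 choose (k - 1)) = (n - k) / k \<le> q / (1 - q).\<close>

lemma choose_pred_mult_le:
  fixes j m k :: nat
  assumes "j \<le> m"
  shows "(j - 1 choose k) * m \<le> (j choose k) * (m - k)"
proof (cases "j = 0")
  case True
  then show ?thesis by (cases k) simp_all
next
  case False
  have "(j - k) * m = j * m - k * m"
    by (simp add: diff_mult_distrib)
  also have "\<dots> \<le> j * m - k * j"
    using assms by (intro diff_le_mono2) simp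
  also have "\<dots> = (m - k) * j"
    by (simp add: diff_mult_distrib2 mult.commute)
  finally have "(j - k) * m \<le> (m - k) * j" .
  then have "(j - k) * (j choose k) * m \<le> (j choose k) * (m - k) * j"
    by (simp add: mult.assoc mult.left_commute)
  then have "(j - 1 choose k) * m * j \<le> (j choose k) * (m - k) * j"
    using binomial_absorb_comp[of j k] by (simp only: ac_simps)
  then show ?thesis using False by simp
qed

lemma choose_diff_mult_power_le:
  fixes m s k :: nat
  shows "(m - s choose k) * m ^ s \<le> (m choose k) * (m - k) ^ s"
proof (induction s)
  case 0
  then show ?case by simp
next
  case (Suc s)
  have "(m - Suc s choose k) * m ^ Suc s = (m - s - 1 choose k) * m * m ^ s"
    by (simp add: algebra_simps)
  also have "\<dots> \<le> (m - s choose k) * (m - k) * m ^ s"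
    using choose_pred_mult_le[of "m - s" m k] by (intro mult_right_mono) simp_all
  also have "\<dots> = (m - s choose k) * m ^ s * (m - k)"
    by (simp add: algebra_simps)
  also have "\<dots> \<le> (m choose k) * (m - k) ^ s * (m - k)"
    using Suc.IH by (rule mult_right_mono) simp
  finally show ?case by (simp add: algebra_simps)
qed

lemma choose_diff_le_power:
  fixes m s k :: nat and r :: real
  assumes "real (m - k) \<le> real m * r" and "s \<le> m"
  shows "real (m - s choose k) \<le> real (m choose k) * r ^ s"
proof -
  have "real (m - s choose k) * real m ^ s \<le> real (m choose k) * real (m - k) ^ s"
    using choose_diff_mult_power_le[of m s k] by (metis of_nat_le_iff of_nat_mult of_nat_power)
  also have "\<dots> \<le> real (m choose k) * (real m * r) ^ s"
    using assms(1) by (intro mult_left_mono power_mono) simp_all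
  also have "\<dots> = real (m choose k) * r ^ s * real m ^ s"
    by (simp add: power_mult_distrib)
  finally show ?thesis
    using assms(2) by (cases "m = 0") simp_all
qed

lemma choose_le_choose_pred_mult:
  fixes m k :: nat and q :: real
  assumes "1 \<le> k" and "0 \<le> q" and "real (Suc m) - real k \<le> real (Suc m) * q"
  shows "(1 - q) * real (m choose k) \<le> q * real (m choose (k - 1))"
proof -
  have absorb: "k * (m choose k) = (m - (k - 1)) * (m choose (k - 1))"
    using binomial_absorption[of "k - 1" m] binomial_absorb_comp[of m "k - 1"] assms(1) by simp
  have "(1 - q) * real (m - (k - 1)) \<le> real k * q"
  proof (cases "k - 1 \<le> m")
    case True
    then have "real (m - (k - 1)) = real (Suc m) - real k" using assms(1) by simp
    then show ?thesis using assms(3) by (simp add: algebra_simps)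
  next
    case False
    then show ?thesis using assms(2) by simp
  qed
  then have "(1 - q) * real (m - (k - 1)) * real (m choose (k - 1))
      \<le> real k * q * real (m choose (k - 1))"
    by (rule mult_right_mono) simp
  moreover have "real k * real (m choose k) = real (m - (k - 1)) * real (m choose (k - 1))"
    using absorb by (metis of_nat_mult)
  ultimately have "real k * ((1 - q) * real (m choose k)) \<le> real k * (q * real (m choose (k - 1)))"
    by (simp add: algebra_simps)
  then show ?thesis using assms(1) by simp
qed

text \<open>The number of k-subsets of an n-set meeting two disjoint subsets of sizes a and b.\<close>

definition hit_both_count :: "nat \<Rightarrow> nat \<Rightarrow> nat \<Rightarrow> nat \<Rightarrow> real" where
  "hit_both_count n k a b =
     real (n choose k) - real (n - a choose k) - real (n - b choose k) + real (n - a - b choose k)"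

lemma hit_both_count_Suc:
  assumes "1 \<le> k" and "b \<le> m"
  shows "hit_both_count (Suc m) k (Suc a) b =
           real (m choose (k - 1)) - real (m - b choose (k - 1)) + hit_both_count m k a b"
proof -
  obtain k' where "k = Suc k'" using assms(1) by (cases k) auto
  moreover have "Suc m - b = Suc (m - b)" using assms(2) by simp
  ultimately show ?thesis by (simp add: hit_both_count_def)
qed

lemma hit_both_count_ge:
  fixes n k a b :: nat and q :: real
  assumes "a + b \<le> n" and "0 \<le> q" and "q \<le> 1" and "real n - real k + 1 \<le> real n * q"
  shows "(1 - q ^ a) * (1 - q ^ b) * real (n choose k) \<le> hit_both_count n k a b"
  using assms(1,4)
proof (induction a arbitrary: n)
  case 0
  then show ?case by (simp add: hit_both_count_def)
next
  case (Suc a)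
  obtain m where n: "n = Suc m" using Suc.prems(1) by (cases n) auto
  have "real n * q \<le> real n" using assms(3) by (simp add: mult_left_le)
  then have k: "1 \<le> k" using Suc.prems(2) by linarith
  have b: "b \<le> m" using Suc.prems(1) n by simp
  have hyp: "real m - real k + 2 \<le> real m * q + q" using Suc.prems(2) n by (simp add: algebra_simps)
  define X where "X = real (m choose (k - 1))"
  define Y where "Y = real (m choose k)"
  have pascal: "real (n choose k) = X + Y"
    unfolding n X_def Y_def using k by (cases k) simp_all
  have IH: "(1 - q ^ a) * (1 - q ^ b) * Y \<le> hit_both_count m k a b"
    unfolding Y_def using Suc.prems(1) hyp assms(3) n by (intro Suc.IH) simp_all
  have miss: "real (m - b choose (k - 1)) \<le> X * q ^ b"
    unfolding X_def
  proof (rule choose_diff_le_power[OF _ b])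
    show "real (m - (k - 1)) \<le> real m * q"
      using hyp assms(2,3) k by (cases "k - 1 \<le> m") simp_all
  qed
  have ratio: "(1 - q) * Y \<le> q * X"
    unfolding X_def Y_def using k assms(2) Suc.prems(2) n by (intro choose_le_choose_pred_mult) simp_all
  have qb: "0 \<le> 1 - q ^ b" using assms(2,3) by (simp add: power_le_one)
  have "(1 - q ^ Suc a) * (X + Y) \<le> X + (1 - q ^ a) * Y"
  proof -
    have "0 \<le> q ^ a * (q * X - (1 - q) * Y)" using ratio assms(2) by simp
    then show ?thesis by (simp add: algebra_simps)
  qed
  from mult_left_mono[OF this qb]
  have "(1 - q ^ Suc a) * (1 - q ^ b) * (X + Y) \<le> (1 - q ^ b) * (X + (1 - q ^ a) * Y)"
    by (simp only: ac_simps)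
  also have "\<dots> = (1 - q ^ b) * X + (1 - q ^ a) * (1 - q ^ b) * Y"
    by (simp add: algebra_simps)
  also have "\<dots> \<le> (X - real (m - b choose (k - 1))) + hit_both_count m k a b"
    using miss IH by (simp add: algebra_simps)
  also have "\<dots> = hit_both_count n k (Suc a) b"
    unfolding n X_def using hit_both_count_Suc[OF k b] by simp
  finally show ?case
    unfolding pascal .
qed

lemma nbhd_Suc: "nbhd (Suc d) = Cons 0 ` nbhd d \<union> {1 # replicate d 0, -1 # replicate d 0}"
proof (intro set_eqI iffI)
  fix v assume "v \<in> nbhd (Suc d)"
  then obtain x w where v: "v = x # w" "length w = d" "\<bar>x\<bar> + sum_list (map abs w) = 1"
    unfolding nbhd_def by (cases v) auto
  have w_nonneg: "0 \<le> sum_list (map abs w)" by (rule sum_list_nonneg) auto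
  show "v \<in> Cons 0 ` nbhd d \<union> {1 # replicate d 0, -1 # replicate d 0}"
  proof (cases "x = 0")
    case True
    then show ?thesis using v by (auto simp: nbhd_def)
  next
    case False
    then have "\<bar>x\<bar> = 1" "sum_list (map abs w) = 0" using v(3) w_nonneg by linarith+
    moreover have "\<forall>y\<in>set w. y = 0"
      using \<open>sum_list (map abs w) = 0\<close> by (subst (asm) sum_list_nonneg_eq_0_iff) auto
    ultimately have "x = 1 \<or> x = -1" "w = replicate d 0"
      using v(2) replicate_length_same[of w 0] by auto
    then show ?thesis using v(1) by auto
  qed
qed (auto simp: nbhd_def sum_list_replicate)

lemma finite_nbhd: "finite (nbhd d)"
  by (induction d) (simp_all add: nbhd_Suc, simp add: nbhd_def)

lemma card_nbhd: "card (nbhd d) = 2 * d"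
proof (induction d)
  case 0
  have "nbhd 0 = {}" by (auto simp: nbhd_def)
  then show ?case by simp
next
  case (Suc d)
  have "Cons 0 ` nbhd d \<inter> {1 # replicate d 0, -1 # replicate d 0} = {}" by auto
  then have "card (nbhd (Suc d)) = card (Cons 0 ` nbhd d) + 2"
    unfolding nbhd_Suc using finite_nbhd by (subst card_Un_disjoint) auto
  then show ?case using Suc.IH by (simp add: card_image)
qed

lemma prob_Pi_pmf_bernoulli_all_False:
  assumes "finite U" and "S \<subseteq> U" and "0 \<le> p" and "p \<le> 1"
  shows "measure_pmf.prob (Pi_pmf U False (\<lambda>_. bernoulli_pmf p)) {f. \<forall>v\<in>S. \<not> f v} = (1 - p) ^ card S"
proof -
  have "{f. \<forall>v\<in>S. \<not> f v} = Pi U (\<lambda>x. if x \<in> S then {False} else UNIV)"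
    using assms(2) by (auto simp: Pi_def)
  then have "measure_pmf.prob (Pi_pmf U False (\<lambda>_. bernoulli_pmf p)) {f. \<forall>v\<in>S. \<not> f v}
      = (\<Prod>x\<in>U. measure_pmf.prob (bernoulli_pmf p) (if x \<in> S then {False} else UNIV))"
    using measure_Pi_pmf_Pi[OF assms(1)] by simp
  also have "\<dots> = (\<Prod>x\<in>U. if x \<in> S then 1 - p else 1)"
    using assms(3,4) by (intro prod.cong) (auto simp: measure_pmf_single)
  also have "\<dots> = (1 - p) ^ card S"
    using assms(1,2) by (simp add: prod.If_cases Int_absorb1)
  finally show ?thesis .
qed

lemma prob_Pp_hits_both:
  assumes "0 \<le> p" and "p \<le> 1" and "A \<subseteq> nbhd d" and "B \<subseteq> nbhd d" and "A \<inter> B = {}"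
  shows "measure_pmf.prob (Pp d p) {N. N \<inter> A \<noteq> {} \<and> N \<inter> B \<noteq> {}}
      = (1 - (1 - p) ^ card A) * (1 - (1 - p) ^ card B)"
proof -
  define P where "P = Pi_pmf (nbhd d) False (\<lambda>_. bernoulli_pmf p)"
  define miss where "miss S = {f. \<forall>v\<in>S. \<not> f v}" for S :: "int list set"
  have prob_miss: "measure_pmf.prob P (miss S) = (1 - p) ^ card S" if "S \<subseteq> nbhd d" for S
    unfolding P_def miss_def using finite_nbhd that assms(1,2) by (rule prob_Pi_pmf_bernoulli_all_False)
  have miss_Un: "miss A \<inter> miss B = miss (A \<union> B)"
    unfolding miss_def by auto
  have "finite A" "finite B" using assms(3,4) finite_nbhd finite_subset by blast+
  then have card_AB: "card (A \<union> B) = card A + card B" using assms(5) by (rule card_Un_disjoint)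
  have "(\<lambda>f. {v \<in> nbhd d. f v}) -` {N. N \<inter> A \<noteq> {} \<and> N \<inter> B \<noteq> {}} = UNIV - (miss A \<union> miss B)"
    using assms(3,4) unfolding miss_def by auto
  then have "measure_pmf.prob (Pp d p) {N. N \<inter> A \<noteq> {} \<and> N \<inter> B \<noteq> {}}
      = 1 - measure_pmf.prob P (miss A \<union> miss B)"
    unfolding Pp_def P_def[symmetric] measure_map_pmf
    using measure_pmf.prob_compl[of "miss A \<union> miss B" P] by simp
  also have "measure_pmf.prob P (miss A \<union> miss B)
      = measure_pmf.prob P (miss A) + measure_pmf.prob P (miss B) - measure_pmf.prob P (miss (A \<union> B))"
    using measure_pmf.finite_measure_Union'[of "miss A" P "miss B"]
      measure_pmf.finite_measure_Diff'[of "miss B" P "miss A"] miss_Un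
    by (simp add: Int_commute)
  also have "\<dots> = (1 - p) ^ card A + (1 - p) ^ card B - (1 - p) ^ card A * (1 - p) ^ card B"
    using assms(3,4) by (simp add: prob_miss card_AB power_add)
  finally show ?thesis
    by (simp add: algebra_simps)
qed

lemma card_subsets_avoiding:
  assumes "finite U" and "C \<subseteq> U"
  shows "card {S. S \<subseteq> U - C \<and> card S = k} = (card U - card C) choose k"
  using assms n_subsets[of "U - C" k] by (simp add: card_Diff_subset finite_subset)

lemma card_subsets_hitting_both:
  assumes "finite U" and "A \<subseteq> U" and "B \<subseteq> U" and "A \<inter> B = {}"
  shows "real (card {S. S \<subseteq> U \<and> card S = k \<and> S \<inter> A \<noteq> {} \<and> S \<inter> B \<noteq> {}})
      = hit_both_count (card U) k (card A) (card B)"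
proof -
  define avoid where "avoid C = {S. S \<subseteq> U - C \<and> card S = k}" for C
  have card_avoid: "card (avoid C) = (card U - card C) choose k" if "C \<subseteq> U" for C
    unfolding avoid_def using assms(1) that by (rule card_subsets_avoiding)
  have fin: "finite (avoid C)" for C
    unfolding avoid_def by (rule finite_subset[of _ "Pow U"]) (auto simp: assms(1))
  have "finite A" "finite B" using assms(1-3) finite_subset by blast+
  then have "card (A \<union> B) = card A + card B" using assms(4) by (rule card_Un_disjoint)
  then have card_avoid_AB: "card (avoid (A \<union> B)) = card U - card A - card B choose k"
    using card_avoid[of "A \<union> B"] assms(2,3) by (simp add: diff_diff_add)
  have hit: "{S. S \<subseteq> U \<and> card S = k \<and> S \<inter> A \<noteq> {} \<and> S \<inter> B \<noteq> {}} = avoid {} - (avoid A \<union> avoid B)"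
    unfolding avoid_def by blast
  have sub: "avoid A \<union> avoid B \<subseteq> avoid {}"
    unfolding avoid_def by blast
  have "avoid A \<inter> avoid B = avoid (A \<union> B)"
    unfolding avoid_def by blast
  then have "card (avoid A \<union> avoid B) + card (avoid (A \<union> B)) = card (avoid A) + card (avoid B)"
    using card_Un_Int[OF fin fin, of A B] by simp
  moreover have "card (avoid A \<union> avoid B) \<le> card (avoid {})"
    using sub by (rule card_mono[OF fin])
  ultimately have "real (card (avoid {} - (avoid A \<union> avoid B)))
      = real (card (avoid {})) - real (card (avoid A)) - real (card (avoid B)) + real (card (avoid (A \<union> B)))"
    using sub by (simp add: card_Diff_subset fin of_nat_diff)
  then show ?thesis
    unfolding hit hit_both_count_def card_avoid_AB using card_avoid[of "{}"] card_avoid assms(2,3) by simp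
qed

lemma prob_Qk_hits_both:
  assumes "k \<le> 2 * d" and "A \<subseteq> nbhd d" and "B \<subseteq> nbhd d" and "A \<inter> B = {}"
  shows "measure_pmf.prob (Qk d k) {N. N \<inter> A \<noteq> {} \<and> N \<inter> B \<noteq> {}}
      = hit_both_count (2 * d) k (card A) (card B) / real (2 * d choose k)"
proof -
  define X where "X = {S. S \<subseteq> nbhd d \<and> card S = k}"
  have "X \<noteq> {}"
    using obtain_subset_with_card_n[of k "nbhd d"] assms(1) unfolding X_def card_nbhd by auto
  moreover have "finite X"
    unfolding X_def by (rule finite_subset[of _ "Pow (nbhd d)"]) (auto simp: finite_nbhd)
  ultimately have "measure_pmf.prob (Qk d k) {N. N \<inter> A \<noteq> {} \<and> N \<inter> B \<noteq> {}}
      = real (card (X \<inter> {N. N \<inter> A \<noteq> {} \<and> N \<inter> B \<noteq> {}})) / real (card X)"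
    unfolding Qk_def X_def[symmetric] by (rule measure_pmf_of_set)
  also have "X \<inter> {N. N \<inter> A \<noteq> {} \<and> N \<inter> B \<noteq> {}}
      = {S. S \<subseteq> nbhd d \<and> card S = k \<and> S \<inter> A \<noteq> {} \<and> S \<inter> B \<noteq> {}}"
    unfolding X_def by auto
  also have "card X = 2 * d choose k"
    unfolding X_def card_nbhd[symmetric] using finite_nbhd by (rule n_subsets)
  finally show ?thesis
    using card_subsets_hitting_both[OF finite_nbhd assms(2-4)] unfolding card_nbhd by simp
qed

theorem lemma3p9:
  fixes d k :: nat and p :: real and A B :: "int list set"
  assumes "d \<ge> 1" and "0 \<le> p" and "p \<le> 1" and "k \<le> 2 * d"
    and "real k \<ge> 1 + 2 * real d * p"
    and "A \<subseteq> nbhd d" and "B \<subseteq> nbhd d" and "A \<inter> B = {}"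
    and "A \<noteq> {}" and "B \<noteq> {}"
  shows "measure_pmf.prob (Pp d p) {N. N \<inter> A \<noteq> {} \<and> N \<inter> B \<noteq> {}}
       \<le> measure_pmf.prob (Qk d k) {N. N \<inter> A \<noteq> {} \<and> N \<inter> B \<noteq> {}}"
proof -
  have "finite A" "finite B" using assms(6,7) finite_nbhd finite_subset by blast+
  then have "card A + card B = card (A \<union> B)" using assms(8) by (simp add: card_Un_disjoint)
  also have "\<dots> \<le> 2 * d"
    using assms(6,7) finite_nbhd card_mono[of "nbhd d" "A \<union> B"] unfolding card_nbhd by simp
  finally have "card A + card B \<le> 2 * d" .
  have "measure_pmf.prob (Pp d p) {N. N \<inter> A \<noteq> {} \<and> N \<inter> B \<noteq> {}}
      = (1 - (1 - p) ^ card A) * (1 - (1 - p) ^ card B)"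
    using assms(2,3,6-8) by (rule prob_Pp_hits_both)
  also have "\<dots> \<le> hit_both_count (2 * d) k (card A) (card B) / real (2 * d choose k)"
  proof -
    have "(1 - (1 - p) ^ card A) * (1 - (1 - p) ^ card B) * real (2 * d choose k)
        \<le> hit_both_count (2 * d) k (card A) (card B)"
      using \<open>card A + card B \<le> 2 * d\<close> assms(2,3,5) by (intro hit_both_count_ge) (simp_all add: algebra_simps)
    moreover have "0 < real (2 * d choose k)" using assms(4) by simp
    ultimately show ?thesis by (simp add: pos_le_divide_eq)
  qed
  also have "\<dots> = measure_pmf.prob (Qk d k) {N. N \<inter> A \<noteq> {} \<and> N \<inter> B \<noteq> {}}"
    using assms(4,6-8) by (rule prob_Qk_hits_both[symmetric])
  finally show ?thesis .
qed

end
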